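(* Generalized MES does not satisfy EJR-M: there exists an instance in which the allocation returned by Generalized MES violates EJR-M.
   Context: Model: There is a set of agents $N=\{1,\dots,n\}$. The resource $R$ consists of a cake $C=[0,c]$ for a real $c\ge 0$ and a set of indivisible goods $G=\{g_1,\dots,g_m\}$ for an integer $m\ge 0$, with $\max(c,m)>0$. A piece of cake is a union of finitely many disjoint closed subintervals of $C$; its length $\ell(\cdot)$ is the sum of the lengths of its intervals. A bundle $R'=(C',G')$ consists of a piece of cake $C'\subseteq C$ and a set $G'\subseteq G$; its size is $s(R')=\ell(C')+|G'|$. Each agent $i$ approves a bundle $R_i=(C_i,G_i)$, and her utility for a bundle $R'$ is $u_i(R')=\ell(C_i\cap C')+|G_i\cap G'|$. A parameter $\alpha\in(0,c+m]$ is given; an allocation is a bundle $A$ with $s(A)\le\alpha$. For a real $t>0$, $N^*\subseteq N$ is $t$-cohesive if $|N^*|\ge t n/\alpha$ and $s(\bigcap_{i\in N^*}R_i)\ge t$. EJR-M: an allocation $A$ satisfies EJR-M if for every real $t>0$ and every $t$-cohesive group $N^*$ for which there exists a bundle $R^*\subseteq R$ with $s(R^* )=t$ and $R^*\subseteq R_i$ for all $i\in N^*$, there is $j\in N^*$ with $u_j(A)\ge t$. Generalized MES (Method of Equal Shares): Step 1: set $R'=(C',G')=(\emptyset,\emptyset)$ and budgets $b_i=\alpha/n$ for all $i$; agents still present are "remaining". Step 2: divide the remaining cake into intervals $I_1,\dots,I_k$ such that each agent approves each interval entirely or not at all. For an interval $I_j=[x_0,x_1]$, $x\in(x_0,x_1]$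 and $\rho\ge 0$, $I_j$ is $(x,\rho)$-affordable if $\sum_{i\in N_{I_j}}\min(b_i,(x-x_0)\rho)=x-x_0$, where $N_{I_j}$ is the set of remaining agents approving $I_j$. A remaining good $g$ is $\rho$-affordable if $\sum_{i\in N_g}\min(b_i,\rho)=1$, where $N_g$ is the set of remaining agents approving $g$. Step 3: if no $\rho$-affordable good and no $(x,\rho)$-affordable piece of cake exists for any $\rho$, return $R'$. Otherwise take either an interval $I_j$ with the smallest $\rho$ together with the largest $x$ such that $I_j$ is $(x,\rho)$-affordable, or a good $g$ with the smallest $\rho$ such that $g$ is $\rho$-affordable, whichever has smaller $\rho$. In the first case deduct $\min(b_i,(x-x_0)\rho)$ from $b_i$ for each $i\in N_{I_j}$, remove $[x_0,x]$ from the remaining cake and add it to $C'$; in the second case deduct $\min(b_i,\rho)$ from $b_i$ for each $i\in N_g$, remove $g$ from the remaining goods and add it to $G'$. Remove all agents with zero budget and go to Step 2. *)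

theory Defs
  imports "HOL-Analysis.Analysis"
begin

definition piece_of_cake :: "real \<Rightarrow> real set \<Rightarrow> bool" where
  "piece_of_cake c S \<longleftrightarrow>
     (\<exists>I :: (real \<times> real) set. finite I \<and>
        (\<forall>(a,b)\<in>I. 0 \<le> a \<and> a \<le> b \<and> b \<le> c) \<and>
        (\<forall>p\<in>I. \<forall>q\<in>I. p \<noteq> q \<longrightarrow> {fst p..snd p} \<inter> {fst q..snd q} = {}) \<and>
        S = (\<Union>(a,b)\<in>I. {a..b}))"

definition len :: "real set \<Rightarrow> real" where
  "len S = measure lborel S"

definition is_bundle :: "real \<Rightarrow> nat \<Rightarrow> real set \<times> nat set \<Rightarrow> bool" where
  "is_bundle c m B \<longleftrightarrow> piece_of_cake c (fst B) \<and> snd B \<subseteq> {..<m}"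

definition bsize :: "real set \<times> nat set \<Rightarrow> real" where
  "bsize B = len (fst B) + real (card (snd B))"

definition utility :: "(nat \<Rightarrow> real set) \<Rightarrow> (nat \<Rightarrow> nat set) \<Rightarrow> nat \<Rightarrow> real set \<times> nat set \<Rightarrow> real" where
  "utility Ci Gi i B = len (Ci i \<inter> fst B) + real (card (Gi i \<inter> snd B))"

definition valid_instance ::
  "nat \<Rightarrow> real \<Rightarrow> nat \<Rightarrow> real \<Rightarrow> (nat \<Rightarrow> real set) \<Rightarrow> (nat \<Rightarrow> nat set) \<Rightarrow> bool" where
  "valid_instance n c m \<alpha> Ci Gi \<longleftrightarrow>
     n \<ge> 1 \<and> c \<ge> 0 \<and> max c (real m) > 0 \<and> 0 < \<alpha> \<and> \<alpha> \<le> c + real m \<and>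
     (\<forall>i<n. is_bundle c m (Ci i, Gi i))"

definition ejr_m ::
  "nat \<Rightarrow> real \<Rightarrow> nat \<Rightarrow> real \<Rightarrow> (nat \<Rightarrow> real set) \<Rightarrow> (nat \<Rightarrow> nat set) \<Rightarrow> real set \<times> nat set \<Rightarrow> bool" where
  "ejr_m n c m \<alpha> Ci Gi A \<longleftrightarrow>
     (\<forall>t::real. \<forall>Ns. t > 0 \<and> Ns \<subseteq> {..<n} \<and>
        real (card Ns) \<ge> t * real n / \<alpha> \<and>
        bsize (\<Inter>i\<in>Ns. Ci i, \<Inter>i\<in>Ns. Gi i) \<ge> t \<and>
        (\<exists>Rs. is_bundle c m Rs \<and> bsize Rs = t \<and> (\<forall>i\<in>Ns. fst Rs \<subseteq> Ci i \<and> snd Rs \<subseteq> Gi i))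
      \<longrightarrow> (\<exists>j\<in>Ns. utility Ci Gi j A \<ge> t))"

text \<open>Generalized Method of Equal Shares, as a nondeterministic transition system
  (nondeterminism: the division of the remaining cake into intervals and tie-breaking).\<close>

record mes_state =
  rcake :: "real set"
  rgoods :: "nat set"
  bud :: "nat \<Rightarrow> real"
  ragents :: "nat set"
  selC :: "real set"
  selG :: "nat set"

definition uniform_interval :: "(nat \<Rightarrow> real set) \<Rightarrow> mes_state \<Rightarrow> real \<Rightarrow> real \<Rightarrow> bool" where
  "uniform_interval Ci s x0 x1 \<longleftrightarrow> x0 < x1 \<and> {x0<..<x1} \<subseteq> rcake s \<and>
     (\<forall>i\<in>ragents s. {x0<..<x1} \<subseteq> Ci i \<or> {x0<..<x1} \<inter> Ci i = {})"

definition cake_approvers :: "(nat \<Rightarrow> real set) \<Rightarrow> mes_state \<Rightarrow> real \<Rightarrow> real \<Rightarrow> nat set" where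
  "cake_approvers Ci s x0 x1 = {i\<in>ragents s. {x0<..<x1} \<subseteq> Ci i}"

definition good_approvers :: "(nat \<Rightarrow> nat set) \<Rightarrow> mes_state \<Rightarrow> nat \<Rightarrow> nat set" where
  "good_approvers Gi s g = {i\<in>ragents s. g \<in> Gi i}"

definition cake_affordable :: "(nat \<Rightarrow> real set) \<Rightarrow> mes_state \<Rightarrow> real \<Rightarrow> real \<Rightarrow> real \<Rightarrow> bool" where
  "cake_affordable Ci s x0 x \<rho> \<longleftrightarrow> x0 < x \<and> \<rho> \<ge> 0 \<and>
     (\<Sum>i\<in>cake_approvers Ci s x0 x. min (bud s i) ((x - x0) * \<rho>)) = x - x0"

definition good_affordable :: "(nat \<Rightarrow> nat set) \<Rightarrow> mes_state \<Rightarrow> nat \<Rightarrow> real \<Rightarrow> bool" where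
  "good_affordable Gi s g \<rho> \<longleftrightarrow> g \<in> rgoods s \<and> \<rho> \<ge> 0 \<and>
     (\<Sum>i\<in>good_approvers Gi s g. min (bud s i) \<rho>) = 1"

definition rho_minimal :: "(nat \<Rightarrow> real set) \<Rightarrow> (nat \<Rightarrow> nat set) \<Rightarrow> mes_state \<Rightarrow> real \<Rightarrow> bool" where
  "rho_minimal Ci Gi s \<rho> \<longleftrightarrow>
     (\<forall>x0 x \<rho>'. uniform_interval Ci s x0 x \<and> cake_affordable Ci s x0 x \<rho>' \<longrightarrow> \<rho> \<le> \<rho>') \<and>
     (\<forall>g \<rho>'. good_affordable Gi s g \<rho>' \<longrightarrow> \<rho> \<le> \<rho>')"

definition mes_terminal :: "(nat \<Rightarrow> real set) \<Rightarrow> (nat \<Rightarrow> nat set) \<Rightarrow> mes_state \<Rightarrow> bool" where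
  "mes_terminal Ci Gi s \<longleftrightarrow>
     \<not> (\<exists>x0 x \<rho>. uniform_interval Ci s x0 x \<and> cake_affordable Ci s x0 x \<rho>) \<and>
     \<not> (\<exists>g \<rho>. good_affordable Gi s g \<rho>)"

inductive mes_step :: "(nat \<Rightarrow> real set) \<Rightarrow> (nat \<Rightarrow> nat set) \<Rightarrow> mes_state \<Rightarrow> mes_state \<Rightarrow> bool"
  for Ci Gi where
  cake_step:
  "\<lbrakk> uniform_interval Ci s x0 x1; x0 < x; x \<le> x1; cake_affordable Ci s x0 x \<rho>;
     rho_minimal Ci Gi s \<rho>;
     \<forall>x'. x0 < x' \<and> x' \<le> x1 \<and> cake_affordable Ci s x0 x' \<rho> \<longrightarrow> x' \<le> x;
     b' = (\<lambda>i. if i \<in> cake_approvers Ci s x0 x1 then bud s i - min (bud s i) ((x - x0) * \<rho>)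
              else bud s i) \<rbrakk>
   \<Longrightarrow> mes_step Ci Gi s
        \<lparr> rcake = rcake s - {x0..x}, rgoods = rgoods s, bud = b',
          ragents = {i \<in> ragents s. b' i \<noteq> 0},
          selC = selC s \<union> {x0..x}, selG = selG s \<rparr>"
| good_step:
  "\<lbrakk> good_affordable Gi s g \<rho>; rho_minimal Ci Gi s \<rho>;
     b' = (\<lambda>i. if i \<in> good_approvers Gi s g then bud s i - min (bud s i) \<rho> else bud s i) \<rbrakk>
   \<Longrightarrow> mes_step Ci Gi s
        \<lparr> rcake = rcake s, rgoods = rgoods s - {g}, bud = b',
          ragents = {i \<in> ragents s. b' i \<noteq> 0},
          selC = selC s, selG = selG s \<union> {g} \<rparr>"

definition mes_init :: "nat \<Rightarrow> real \<Rightarrow> nat \<Rightarrow> real \<Rightarrow> mes_state" where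
  "mes_init n c m \<alpha> = \<lparr> rcake = {0..c}, rgoods = {..<m}, bud = (\<lambda>_. \<alpha> / real n),
      ragents = {..<n}, selC = {}, selG = {} \<rparr>"

definition mes_output ::
  "nat \<Rightarrow> real \<Rightarrow> nat \<Rightarrow> real \<Rightarrow> (nat \<Rightarrow> real set) \<Rightarrow> (nat \<Rightarrow> nat set) \<Rightarrow> real set \<times> nat set \<Rightarrow> bool" where
  "mes_output n c m \<alpha> Ci Gi A \<longleftrightarrow>
     (\<exists>s. (mes_step Ci Gi)\<^sup>*\<^sup>* (mes_init n c m \<alpha>) s \<and> mes_terminal Ci Gi s \<and> A = (selC s, selG s))"

end

theory Submission
  imports Defs
begin

text \<open>Three agents approve the whole cake [0,1], and only agents 0 and 1 approve the single good;
  with \<alpha> = 2 every agent starts with budget 2/3. Every piece of remaining cake is affordable at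
  rate 1/3, while buying the good needs rate at least 1/2, so MES keeps buying cake until the
  money is spent and never buys the good. Agents 0 and 1 thus end with utility at most 1, although
  they form a 4/3-cohesive group that can jointly afford the bundle ([0,1/3], {good 0}).\<close>

lemma fmeasurable_Icc_Diff_closed:
  fixes a b :: real
  assumes "closed K"
  shows "{a..b} - K \<in> fmeasurable lborel"
  using assms fmeasurable_cbox[of a b] by (intro fmeasurable_Diff) (auto intro: borel_closed)

lemma measure_Diff_Icc:
  fixes x0 x :: real
  assumes R: "R \<in> fmeasurable lborel" and "x0 \<le> x" "{x0<..<x} \<subseteq> R"
  shows "measure lborel (R - {x0..x}) = measure lborel R - (x - x0)"
proof -
  have RI: "R \<inter> {x0..x} \<in> fmeasurable lborel"
    using R by (intro fmeasurable_Int_fmeasurable) auto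
  have "measure lborel (R \<inter> {x0..x}) = x - x0"
  proof (rule antisym)
    have "measure lborel (R \<inter> {x0..x}) \<le> measure lborel {x0..x}"
      using RI fmeasurable_cbox[of x0 x] by (intro measure_mono_fmeasurable) auto
    then show "measure lborel (R \<inter> {x0..x}) \<le> x - x0"
      using \<open>x0 \<le> x\<close> by simp
    have "measure lborel {x0<..<x} \<le> measure lborel (R \<inter> {x0..x})"
      using RI assms(3) by (intro measure_mono_fmeasurable) auto
    then show "x - x0 \<le> measure lborel (R \<inter> {x0..x})"
      using \<open>x0 \<le> x\<close> by simp
  qed
  moreover have "R - {x0..x} = R - R \<inter> {x0..x}" by blast
  ultimately show ?thesis
    using measurable_measure_Diff[of R lborel "R \<inter> {x0..x}"] R RI by auto
qed

lemma Ioo_subset_Icc_Diff_closed: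
  fixes a b :: real
  assumes "closed K" "measure lborel ({a..b} - K) > 0"
  obtains x0 x1 where "x0 < x1" "{x0<..<x1} \<subseteq> {a..b} - K"
proof -
  have "{a<..<b} - K \<noteq> {}"
  proof
    assume "{a<..<b} - K = {}"
    then have "{a..b} - K \<subseteq> {a, b}" by (force simp: set_eq_iff)
    moreover have "{a..b} - K \<in> sets lborel"
      using fmeasurable_Icc_Diff_closed[OF assms(1)] by (rule fmeasurableD)
    ultimately have "{a..b} - K \<in> null_sets lborel"
      using finite_imp_null_set_lborel[of "{a, b}"] by (blast intro: null_sets_subset)
    then show False using assms(2) measure_eq_0_null_sets by fastforce
  qed
  then obtain p where p: "p \<in> {a<..<b} - K" by blast
  have "open ({a<..<b} - K)" using assms(1) by (intro open_Diff) auto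
  then obtain e where "e > 0" "ball p e \<subseteq> {a<..<b} - K"
    using p open_contains_ball by blast
  then show ?thesis
    by (intro that[of "p - e" "p + e"]) (auto simp: ball_eq_greaterThanLessThan)
qed

lemma measure_le_of_subset_Icc:
  fixes S :: "real set"
  assumes "S \<subseteq> {a..b}" "a \<le> b"
  shows "measure lborel S \<le> b - a"
proof (cases "S \<in> sets lborel")
  case True
  then have "measure lborel S \<le> measure lborel {a..b}"
    using assms(1) fmeasurable_cbox[of a b] by (intro measure_mono_fmeasurable) auto
  then show ?thesis using assms(2) by simp
next
  case False
  then show ?thesis using assms(2) by (simp add: measure_notin_sets)
qed

lemma piece_of_cake_Icc: "0 \<le> a \<Longrightarrow> a \<le> b \<Longrightarrow> b \<le> c \<Longrightarrow> piece_of_cake c {a..b}"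
  unfolding piece_of_cake_def by (intro exI[of _ "{(a, b)}"]) auto

definition cex_cake :: "nat \<Rightarrow> real set" where
  "cex_cake i = {0..1}"

definition cex_goods :: "nat \<Rightarrow> nat set" where
  "cex_goods i = (if i \<le> 1 then {0} else {})"

lemma cex_valid_instance: "valid_instance 3 1 1 2 cex_cake cex_goods"
  unfolding valid_instance_def is_bundle_def cex_cake_def cex_goods_def
  by (auto intro: piece_of_cake_Icc)

text \<open>Every agent pays a third of each piece of cake bought, so all budgets equal
  2/3 - (1 - \<mu>)/3, where \<mu> is the measure of the remaining cake.\<close>
definition cex_budget :: "mes_state \<Rightarrow> real" where
  "cex_budget s = (1 + measure lborel (rcake s)) / 3"

text \<open>The closed set K is the cake taken so far; it makes remaining cake of positive measure
  contain an open interval.\<close>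
definition cex_invariant :: "mes_state \<Rightarrow> bool" where
  "cex_invariant s \<longleftrightarrow> (\<exists>K. closed K \<and> rcake s = {0..1} - K) \<and>
     (\<forall>i<3. bud s i = cex_budget s) \<and>
     ragents s = {0, 1, 2} \<and> rgoods s = {0} \<and> selG s = {} \<and> selC s \<subseteq> {0..1}"

lemma cex_invariant_init: "cex_invariant (mes_init 3 1 1 2)"
  unfolding cex_invariant_def cex_budget_def mes_init_def by (auto intro!: exI[of _ "{}"])

lemma cex_cake_approvers:
  assumes "cex_invariant s" "x0 < x" "{x0<..<x} \<subseteq> rcake s"
  shows "cake_approvers cex_cake s x0 x = {0, 1, 2}"
  using assms unfolding cake_approvers_def cex_invariant_def cex_cake_def by auto

lemma cex_cake_affordable_iff:
  assumes "cex_invariant s" "x0 < x" "{x0<..<x} \<subseteq> rcake s"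
  shows "cake_affordable cex_cake s x0 x \<rho> \<longleftrightarrow>
           0 \<le> \<rho> \<and> min (cex_budget s) ((x - x0) * \<rho>) = (x - x0) / 3"
  using assms cex_cake_approvers[OF assms]
  unfolding cake_affordable_def cex_invariant_def by auto

lemma cex_cake_affordable_rate_ge:
  assumes "cex_invariant s" "x0 < x" "{x0<..<x} \<subseteq> rcake s"
    and "cake_affordable cex_cake s x0 x \<rho>"
  shows "1/3 \<le> \<rho>"
proof -
  have "(x - x0) / 3 \<le> (x - x0) * \<rho>"
    using assms(4) unfolding cex_cake_affordable_iff[OF assms(1-3)] by (metis min.cobounded2)
  then show ?thesis using \<open>x0 < x\<close> by simp
qed

lemma cex_cake_affordable_one_third:
  assumes "cex_invariant s" "x0 < x" "{x0<..<x} \<subseteq> rcake s" "x - x0 \<le> 3 * cex_budget s"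
  shows "cake_affordable cex_cake s x0 x (1/3)"
  using assms(4) unfolding cex_cake_affordable_iff[OF assms(1-3)] by simp

lemma cex_good_affordable:
  assumes "cex_invariant s" "good_affordable cex_goods s g \<rho>"
  shows "1/2 \<le> \<rho>" "1/2 \<le> cex_budget s"
proof -
  have "g = 0" using assms unfolding good_affordable_def cex_invariant_def by auto
  then have "good_approvers cex_goods s g = {0, 1}"
    using assms(1) unfolding good_approvers_def cex_invariant_def cex_goods_def by auto
  then have "2 * min (cex_budget s) \<rho> = 1"
    using assms unfolding good_affordable_def cex_invariant_def by simp
  then show "1/2 \<le> \<rho>" "1/2 \<le> cex_budget s" by auto
qed

lemma cex_rho_minimal:
  assumes "cex_invariant s"
  shows "rho_minimal cex_cake cex_goods s (1/3)"
  unfolding rho_minimal_def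
proof (intro conjI allI impI)
  show "1/3 \<le> \<rho>" if "uniform_interval cex_cake s x0 x \<and> cake_affordable cex_cake s x0 x \<rho>"
    for x0 x \<rho>
    using that cex_cake_affordable_rate_ge[OF assms] unfolding uniform_interval_def by blast
  show "1/3 \<le> \<rho>" if "good_affordable cex_goods s g \<rho>" for g \<rho>
    using cex_good_affordable(1)[OF assms that] by simp
qed

lemma cex_good_not_rho_minimal:
  assumes inv: "cex_invariant s" and "good_affordable cex_goods s g \<rho>"
  shows "\<not> rho_minimal cex_cake cex_goods s \<rho>"
proof
  assume min: "rho_minimal cex_cake cex_goods s \<rho>"
  obtain K where K: "closed K" "rcake s = {0..1} - K"
    using inv[unfolded cex_invariant_def, THEN conjunct1] by blast
  have budget: "1/2 \<le> cex_budget s" and "1/2 \<le> \<rho>"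
    using cex_good_affordable[OF assms] by auto
  then have "measure lborel ({0..1} - K) > 0" using K(2) unfolding cex_budget_def by simp
  then obtain x0 x where "x0 < x" "{x0<..<x} \<subseteq> {0..1} - K"
    by (rule Ioo_subset_Icc_Diff_closed[OF K(1)])
  then have I: "x0 < x" "{x0<..<x} \<subseteq> rcake s" and "x \<le> 1" "0 \<le> x0"
    using K(2) greaterThanLessThan_subseteq_atLeastAtMost_iff[of x0 x 0 1] by auto
  then have "cake_affordable cex_cake s x0 x (1/3)"
    using budget by (intro cex_cake_affordable_one_third[OF inv I]) simp
  moreover have "uniform_interval cex_cake s x0 x"
    using I \<open>x \<le> 1\<close> \<open>0 \<le> x0\<close> unfolding uniform_interval_def cex_cake_def by auto
  ultimately have "\<rho> \<le> 1/3" using min unfolding rho_minimal_def by blast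
  then show False using \<open>1/2 \<le> \<rho>\<close> by simp
qed

lemma cex_invariant_step:
  assumes "mes_step cex_cake cex_goods s s'" "cex_invariant s"
  shows "cex_invariant s'"
  using assms(1)
proof cases
  case (cake_step x0 x1 x \<rho> b')
  obtain K where K: "closed K" "rcake s = {0..1} - K"
    using assms(2)[unfolded cex_invariant_def, THEN conjunct1] by blast
  have inv: "\<forall>i<3. bud s i = cex_budget s" "ragents s = {0, 1, 2}" "rgoods s = {0}"
      "selG s = {}" "selC s \<subseteq> {0..1}"
    using assms(2) unfolding cex_invariant_def by simp_all
  have I1: "x0 < x1" "{x0<..<x1} \<subseteq> rcake s"
    using cake_step(2) by (simp_all add: uniform_interval_def)
  have I: "{x0<..<x} \<subseteq> rcake s"
    using I1(2) \<open>x \<le> x1\<close> greaterThanLessThan_subseteq_greaterThanLessThan[of x0 x x0 x1]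
    by (meson order_refl order_trans)
  have R: "rcake s \<in> fmeasurable lborel"
    using fmeasurable_Icc_Diff_closed[OF K(1)] K(2) by simp
  have pay: "min (cex_budget s) ((x - x0) * \<rho>) = (x - x0) / 3"
    using cake_step(5) cex_cake_affordable_iff[OF assms(2) \<open>x0 < x\<close> I] by blast
  have remaining: "measure lborel (rcake s - {x0..x}) = measure lborel (rcake s) - (x - x0)"
    using measure_Diff_Icc[OF R _ I] \<open>x0 < x\<close> by simp
  have b': "b' i = (1 + measure lborel (rcake s - {x0..x})) / 3" if "i < 3" for i
  proof -
    have "i \<in> cake_approvers cex_cake s x0 x1"
      using that cex_cake_approvers[OF assms(2) I1] by auto
    then have "b' i = cex_budget s - (x - x0) / 3"
      using inv(1) that pay unfolding cake_step(8) by simp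
    then show ?thesis
      unfolding remaining cex_budget_def by (simp add: diff_divide_distrib)
  qed
  have "0 < 1 + measure lborel (rcake s - {x0..x})"
    using measure_nonneg[of lborel "rcake s - {x0..x}"] by linarith
  then have "b' i \<noteq> 0" if "i < 3" for i
    using b'[OF that] by simp
  then have "{i \<in> ragents s. b' i \<noteq> 0} = {0, 1, 2}"
    using inv(2) by auto
  moreover have "{x0..x} \<subseteq> {0..1}"
    using order_trans[OF I[unfolded K(2)] Diff_subset] \<open>x0 < x\<close>
    by (simp add: greaterThanLessThan_subseteq_atLeastAtMost_iff)
  moreover have "\<exists>K'. closed K' \<and> rcake s - {x0..x} = {0..1} - K'"
    using K by (intro exI[of _ "K \<union> {x0..x}"]) auto
  ultimately show ?thesis
    unfolding cake_step(1) cex_invariant_def cex_budget_def using inv(2-5) b' by simp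
next
  case (good_step g \<rho> b')
  then show ?thesis using cex_good_not_rho_minimal[OF assms(2)] by blast
qed

lemma cex_invariant_reachable:
  "(mes_step cex_cake cex_goods)\<^sup>*\<^sup>* (mes_init 3 1 1 2) s \<Longrightarrow> cex_invariant s"
  by (induction rule: rtranclp_induct) (blast intro: cex_invariant_init cex_invariant_step)+

lemma cex_terminal:
  assumes "cex_invariant s" "rcake s = {}"
  shows "mes_terminal cex_cake cex_goods s"
proof -
  have "cex_budget s = 1/3" using assms(2) unfolding cex_budget_def by simp
  then show ?thesis
    using assms cex_good_affordable(2)[OF assms(1)]
    unfolding mes_terminal_def uniform_interval_def by auto
qed

lemma cex_utility_le_1:
  assumes "cex_invariant s"
  shows "utility cex_cake cex_goods j (selC s, selG s) \<le> 1"
proof -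
  have "selG s = {}" "cex_cake j \<inter> selC s \<subseteq> {0..1}"
    using assms unfolding cex_invariant_def by auto
  then show ?thesis
    using measure_le_of_subset_Icc[of "cex_cake j \<inter> selC s" 0 1]
    unfolding utility_def len_def by simp
qed

lemma cex_ejr_m_demands:
  assumes "ejr_m 3 1 1 2 cex_cake cex_goods A"
  shows "\<exists>j\<in>{0, 1}. 4/3 \<le> utility cex_cake cex_goods j A"
proof -
  have "\<exists>Rs. is_bundle 1 1 Rs \<and> bsize Rs = 4/3 \<and>
          (\<forall>i\<in>{0, 1}. fst Rs \<subseteq> cex_cake i \<and> snd Rs \<subseteq> cex_goods i)"
    by (intro exI[of _ "({0..1/3}, {0})"])
      (auto simp: is_bundle_def bsize_def len_def cex_cake_def cex_goods_def intro: piece_of_cake_Icc)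
  moreover have "bsize (\<Inter>i\<in>{0, 1}. cex_cake i, \<Inter>i\<in>{0, 1}. cex_goods i) = 2"
    unfolding bsize_def len_def cex_cake_def cex_goods_def by simp
  ultimately show ?thesis
    using assms unfolding ejr_m_def by (elim allE[of _ "4/3"] allE[of _ "{0, 1}"] impE) auto
qed

lemma cex_mes_output_exists: "\<exists>A. mes_output 3 1 1 2 cex_cake cex_goods A"
proof -
  let ?s0 = "mes_init 3 1 1 2"
  define b' where "b' = (\<lambda>i. if i \<in> cake_approvers cex_cake ?s0 0 1
    then bud ?s0 i - min (bud ?s0 i) ((1 - 0) * (1/3)) else bud ?s0 i)"
  define s where "s = \<lparr>rcake = rcake ?s0 - {0..1}, rgoods = rgoods ?s0, bud = b',
    ragents = {i \<in> ragents ?s0. b' i \<noteq> 0}, selC = selC ?s0 \<union> {0..1}, selG = selG ?s0\<rparr>"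
  have "uniform_interval cex_cake ?s0 0 1"
    unfolding uniform_interval_def mes_init_def cex_cake_def by auto
  moreover have "cake_affordable cex_cake ?s0 0 1 (1/3)"
    using cex_invariant_init
    by (intro cex_cake_affordable_one_third) (auto simp: cex_budget_def mes_init_def)
  ultimately have step: "mes_step cex_cake cex_goods ?s0 s"
    unfolding s_def using cex_rho_minimal[OF cex_invariant_init]
    by (intro mes_step.cake_step) (auto simp: b'_def)
  have "rcake s = {}" by (simp add: s_def mes_init_def)
  then have "mes_terminal cex_cake cex_goods s"
    using cex_terminal cex_invariant_step[OF step cex_invariant_init] by blast
  then show ?thesis
    unfolding mes_output_def using r_into_rtranclp[of "mes_step cex_cake cex_goods", OF step]
    by blast
qed

lemma cex_mes_output_violates_ejr_m:
  assumes "mes_output 3 1 1 2 cex_cake cex_goods A"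
  shows "\<not> ejr_m 3 1 1 2 cex_cake cex_goods A"
proof
  assume "ejr_m 3 1 1 2 cex_cake cex_goods A"
  then obtain j where demand: "4/3 \<le> utility cex_cake cex_goods j A"
    using cex_ejr_m_demands by blast
  obtain s where "(mes_step cex_cake cex_goods)\<^sup>*\<^sup>* (mes_init 3 1 1 2) s"
    and "A = (selC s, selG s)"
    using assms unfolding mes_output_def by blast
  then have "utility cex_cake cex_goods j A \<le> 1"
    using cex_utility_le_1[OF cex_invariant_reachable] by blast
  then show False using demand by linarith
qed

theorem mainTheorem6:
  shows "\<exists>n c m \<alpha> Ci Gi. valid_instance n c m \<alpha> Ci Gi \<and>
           (\<exists>A. mes_output n c m \<alpha> Ci Gi A) \<and>
           (\<forall>A. mes_output n c m \<alpha> Ci Gi A \<longrightarrow> \<not> ejr_m n c m \<alpha> Ci Gi A)"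
  using cex_valid_instance cex_mes_output_exists cex_mes_output_violates_ejr_m by blast

end
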